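(* For each $p\in(0,1]$, $\mathrm{Dim}_{\mathrm H}(\Pi_p)=(d+\log_2p)^+$ almost surely.
   Context: For integers $k\ge 0$ let $\mathcal{V}_k:=[-2^k,2^k)^d\subset\mathbf{R}^d$, $\mathcal{S}_0:=\mathcal{V}_0$ and $\mathcal{S}_{k+1}:=\mathcal{V}_{k+1}\setminus\mathcal{V}_k$. For $n\in\mathbf{Z}$, $\mathcal{D}_n$ denotes the set of dyadic cubes $\prod_{i=1}^d[j_i2^n,(j_i+1)2^n)$ with $(j_1,\dots,j_d)\in\mathbf{Z}^d$. For $A\subseteq\mathbf{R}^d$, $\alpha>0$ and $k\ge0$, let $\mathcal{N}_\alpha(A,\mathcal{S}_k):=\min\sum_{i=1}^m2^{\alpha(\ell_i-k-1)}$, the minimum over all finite covers of $A\cap\mathcal{S}_k$ by cubes $Q_1,\dots,Q_m$ with $Q_i\in\mathcal{D}_{\ell_i}$, $\ell_i\ge0$. The macroscopic Hausdorff dimension is $\mathrm{Dim}_{\mathrm H}(A):=\inf\{\alpha>0:\sum_{k=1}^\infty\mathcal{N}_\alpha(A,\mathcal{S}_k)<\infty\}$. Macroscopic fractal percolation: on a probability space $(\Omega,\mathcal{F},\mathbb{P})$, for each integer $k\ge0$ let $\{U_k(Q)\}$ be i.i.d. Uniform$(0,1)$ random variables indexed by the dyadic cubes $Q\subseteq\mathcal{V}_k$ with $Q\in\mathcal{D}_j$ for some $0\le j\le k$, the families for different $k$ being independent. For $x\in\mathcal{V}_k\cap\mathbf{Z}^d$ and $1\le i\le k+1$ let $Q^{(k)}_i(x)$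 be the unique cube of $\mathcal{D}_{k+1-i}$ containing $x$. For $p\in(0,1]$, $\Pi_p\subseteq\mathbf{R}^d$ is the union, over all $k\ge0$ and all $x\in\mathbf{Z}^d\cap\mathcal{S}_k$ such that $U_k(Q^{(k)}_i(x))<p$ for every $i=1,\dots,k+1$, of the unit cubes $[x_1,x_1+1)\times\cdots\times[x_d,x_d+1)$. $x^+:=\max(x,0)$. *)

theory Defs
  imports "HOL-Probability.Probability"
begin

text \<open>Points of R^d are vectors real^'n with d = CARD('n).\<close>

definition Vk :: "nat \<Rightarrow> (real^'n::finite) set" where
  "Vk k = {x. \<forall>i. - (2 ^ k) \<le> x $ i \<and> x $ i < 2 ^ k}"

definition Sk :: "nat \<Rightarrow> (real^'n::finite) set" where
  "Sk k = (if k = 0 then Vk 0 else Vk k - Vk (k - 1))"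

definition dcube :: "nat \<Rightarrow> ('n::finite \<Rightarrow> int) \<Rightarrow> (real^'n) set" where
  "dcube l j = {x. \<forall>i. real_of_int (j i) * 2 ^ l \<le> x $ i \<and> x $ i < (real_of_int (j i) + 1) * 2 ^ l}"

definition Nalpha :: "real \<Rightarrow> (real^'n::finite) set \<Rightarrow> nat \<Rightarrow> real" where
  "Nalpha \<alpha> A k = Inf {(\<Sum>(l, j)\<in>C. 2 powr (\<alpha> * (real l - real k - 1))) | C.
      finite C \<and> A \<inter> Sk k \<subseteq> (\<Union>(l, j)\<in>C. dcube l j)}"

definition DimH :: "(real^'n::finite) set \<Rightarrow> real" where
  "DimH A = Inf {\<alpha>. \<alpha> > 0 \<and> summable (\<lambda>k. Nalpha \<alpha> A (Suc k))}"

text \<open>Index set of the uniform variables: (k, l, j) with the cube dcube l j of level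
  l \<le> k contained in V_k.\<close>
definition perc_index :: "(nat \<times> nat \<times> ('n::finite \<Rightarrow> int)) set" where
  "perc_index = {(k, l, j). l \<le> k \<and> dcube l j \<subseteq> (Vk k :: (real^'n) set)}"

definition Pi_perc :: "(nat \<times> nat \<times> ('n::finite \<Rightarrow> int) \<Rightarrow> 'a \<Rightarrow> real) \<Rightarrow> real \<Rightarrow> 'a \<Rightarrow> (real^'n) set" where
  "Pi_perc U p \<omega> = \<Union> {dcube 0 z | z k. (\<chi> m. real_of_int (z m)) \<in> Sk k \<and>
      (\<forall>l\<le>k. U (k, l, \<lambda>m. \<lfloor>real_of_int (z m) / 2 ^ l\<rfloor>) \<omega> < p)}"

end

theory Submission
  imports Defs
begin

text \<open>
  Upper bound: the unit cubes of \<open>\<Pi>\<^sub>p \<inter> S\<^sub>k\<close> cover it at cost \<open>2\<^sup>-\<^sup>\<alpha>\<^sup>(\<^sup>k\<^sup>+\<^sup>1\<^sup>)\<close> each, and their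
  expected number is \<open>(2\<^sup>k\<^sup>+\<^sup>1)\<^sup>d p\<^sup>k\<^sup>+\<^sup>1\<close>, so \<open>\<Sum>\<^sub>k N\<^sub>\<alpha>(\<Pi>\<^sub>p, S\<^sub>k)\<close> has finite expectation, hence is finite
  almost surely, as soon as \<open>2\<^sup>\<alpha> > 2\<^sup>d p\<close>.

  Lower bound: fix \<open>0 < \<alpha> < d + log\<^sub>2 p\<close> and a dyadic cube of level \<open>n\<close> inside \<open>S\<^sub>n\<^sub>+\<^sub>1\<close>. Let
  \<open>X\<close> be the number of retained unit cubes in it, normalised to mean \<open>1\<close>, and \<open>Y\<close> their normalised
  \<open>\<alpha>\<close>-energy. Two retained cubes whose ancestors merge at level \<open>h\<close> share \<open>n + 2 - h\<close> of their
  uniforms, which makes \<open>E X\<^sup>2\<close> and \<open>E Y\<close> bounded (a geometric series in \<open>2\<^sup>\<alpha> / (2\<^sup>d p)\<close>). A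
  Paley-Zygmund argument gives \<open>X \<ge> 1/2\<close> and \<open>Y \<le> C\<close> with probability at least \<open>c > 0\<close>, and on
  that event any cover has cost at least \<open>1/(4C)\<close> by an energy (AM-GM) estimate. The events for
  different \<open>n\<close> use disjoint sets of uniforms, so by the Borel 0-1 law infinitely many of them
  occur almost surely and \<open>\<Sum>\<^sub>k N\<^sub>\<alpha>(\<Pi>\<^sub>p, S\<^sub>k)\<close> diverges.
\<close>

subsection \<open>Dyadic cubes and shells\<close>

definition ancestor :: "nat \<Rightarrow> ('i \<Rightarrow> int) \<Rightarrow> ('i \<Rightarrow> int)" where
  "ancestor l z = (\<lambda>m. z m div 2 ^ l)"

definition int_vec :: "('n::finite \<Rightarrow> int) \<Rightarrow> real^'n" where
  "int_vec z = (\<chi> m. real_of_int (z m))"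

lemma floor_divide_pow2: "\<lfloor>real_of_int a / 2 ^ l\<rfloor> = a div 2 ^ l"
proof -
  have "(2::real) ^ l = real_of_int (2 ^ l)" by simp
  then show ?thesis by (simp only: floor_divide_of_int_eq)
qed

lemma of_int_in_dyadic_interval_iff:
  "real_of_int j * 2 ^ l \<le> real_of_int a \<and> real_of_int a < (real_of_int j + 1) * 2 ^ l
    \<longleftrightarrow> j = a div 2 ^ l"
proof -
  have "j = a div 2 ^ l \<longleftrightarrow> j = \<lfloor>real_of_int a / 2 ^ l\<rfloor>" by (simp add: floor_divide_pow2)
  also have "\<dots> \<longleftrightarrow> real_of_int j \<le> real_of_int a / 2 ^ l \<and> real_of_int a / 2 ^ l < real_of_int j + 1"
    by (metis floor_eq_iff)
  also have "\<dots> \<longleftrightarrow> real_of_int j * 2 ^ l \<le> real_of_int a \<and> real_of_int a < (real_of_int j + 1) * 2 ^ l"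
    by (simp add: pos_le_divide_eq pos_divide_less_eq)
  finally show ?thesis by simp
qed

lemma div_pow2_eq_iff: "j = a div 2 ^ l \<longleftrightarrow> j * 2 ^ l \<le> a \<and> a < (j + 1) * (2::int) ^ l"
proof -
  have "real_of_int j * 2 ^ l \<le> real_of_int a \<longleftrightarrow> real_of_int (j * 2 ^ l) \<le> real_of_int a"
    by simp
  moreover have "real_of_int a < (real_of_int j + 1) * 2 ^ l \<longleftrightarrow> real_of_int a < real_of_int ((j + 1) * 2 ^ l)"
    by simp
  ultimately show ?thesis
    using of_int_in_dyadic_interval_iff[of j l a] by (simp only: of_int_le_iff of_int_less_iff)
qed

lemma ancestor_add: "ancestor (a + b) z = ancestor b (ancestor a z)"
  unfolding ancestor_def by (simp add: power_add zdiv_zmult2_eq)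

lemma ancestor_eq_mono:
  assumes "ancestor l x = ancestor l y" "l \<le> l'"
  shows "ancestor l' x = ancestor l' y"
  by (metis assms ancestor_add le_add_diff_inverse)

lemma ancestor_fiber_eq:
  "{z::'i::finite \<Rightarrow> int. ancestor h z = a} = Pi UNIV (\<lambda>i. {a i * 2 ^ h ..< (a i + 1) * 2 ^ h})"
proof -
  have "t div 2 ^ h = c \<longleftrightarrow> c * 2 ^ h \<le> t \<and> t < (c + 1) * 2 ^ h" for t c :: int
    using div_pow2_eq_iff by metis
  then show ?thesis unfolding ancestor_def fun_eq_iff Pi_iff by auto
qed

lemma finite_ancestor_fiber: "finite {z::'i::finite \<Rightarrow> int. ancestor h z = a}"
  unfolding ancestor_fiber_eq PiE_UNIV_domain[symmetric] by (rule finite_PiE) auto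

lemma card_ancestor_fiber: "card {z::'i::finite \<Rightarrow> int. ancestor h z = a} = (2 ^ h) ^ CARD('i)"
proof -
  have "card {z::'i \<Rightarrow> int. ancestor h z = a} = (\<Prod>i\<in>UNIV. card {a i * 2 ^ h ..< (a i + 1) * 2 ^ h})"
    unfolding ancestor_fiber_eq PiE_UNIV_domain[symmetric] by (rule card_PiE) auto
  also have "\<dots> = (\<Prod>i\<in>(UNIV::'i set). 2 ^ h)"
    by (intro prod.cong refl) (simp add: algebra_simps nat_power_eq)
  finally show ?thesis by simp
qed

lemma int_vec_in_dcube_iff: "int_vec z \<in> dcube l j \<longleftrightarrow> j = ancestor l z"
  unfolding dcube_def int_vec_def ancestor_def
  using of_int_in_dyadic_interval_iff by (auto simp: fun_eq_iff)

lemma int_vec_in_dcube0: "int_vec z \<in> dcube 0 z"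
  by (simp add: int_vec_in_dcube_iff ancestor_def)

lemma Pi_perc_eq: "Pi_perc U p \<omega> = \<Union> {dcube 0 z | z k. int_vec z \<in> Sk k \<and>
      (\<forall>l\<le>k. U (k, l, ancestor l z) \<omega> < p)}"
  unfolding Pi_perc_def int_vec_def ancestor_def floor_divide_pow2 by simp

definition int_box :: "nat \<Rightarrow> ('i \<Rightarrow> int) set" where
  "int_box k = {z. \<forall>i. - (2 ^ k) \<le> z i \<and> z i < 2 ^ k}"

lemma int_box_eq: "int_box k = Pi UNIV (\<lambda>i. {- (2 ^ k) ..< 2 ^ k})"
  unfolding int_box_def by auto

lemma finite_int_box: "finite (int_box k :: ('i::finite \<Rightarrow> int) set)"
  unfolding int_box_eq PiE_UNIV_domain[symmetric] by (rule finite_PiE) auto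

lemma card_int_box: "card (int_box k :: ('i::finite \<Rightarrow> int) set) = (2 ^ (k + 1)) ^ CARD('i)"
proof -
  have "card (int_box k :: ('i \<Rightarrow> int) set) = (\<Prod>i\<in>(UNIV::'i set). card {- (2 ^ k) ..< (2::int) ^ k})"
    unfolding int_box_eq PiE_UNIV_domain[symmetric] by (rule card_PiE) auto
  also have "\<dots> = (\<Prod>i\<in>(UNIV::'i set). 2 ^ (k + 1))"
    by (intro prod.cong refl) (simp add: nat_mult_distrib nat_power_eq)
  finally show ?thesis by simp
qed

lemma int_vec_in_Vk_iff: "int_vec z \<in> Vk k \<longleftrightarrow> z \<in> int_box k"
proof -
  have "\<And>a::int. - (2 ^ k) \<le> real_of_int a \<longleftrightarrow> - (2 ^ k) \<le> a"
    by (metis of_int_le_iff of_int_minus of_int_numeral of_int_power)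
  moreover have "\<And>a::int. real_of_int a < 2 ^ k \<longleftrightarrow> a < 2 ^ k"
    by (metis of_int_less_iff of_int_numeral of_int_power)
  ultimately show ?thesis unfolding Vk_def int_vec_def int_box_def by simp
qed

lemma dcube0_in_Vk_iff:
  assumes "x \<in> dcube 0 z"
  shows "x \<in> Vk k \<longleftrightarrow> int_vec z \<in> Vk k"
proof -
  have z: "z i = \<lfloor>x $ i\<rfloor>" for i
    using assms unfolding dcube_def by (intro floor_unique[symmetric]) auto
  have "- (2 ^ k) \<le> x $ i \<longleftrightarrow> - (2 ^ k) \<le> z i" for i
    unfolding z by (metis le_floor_iff of_int_minus of_int_numeral of_int_power)
  moreover have "x $ i < 2 ^ k \<longleftrightarrow> z i < 2 ^ k" for i
    unfolding z by (metis floor_less_iff of_int_numeral of_int_power)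
  ultimately show ?thesis unfolding int_vec_in_Vk_iff by (simp add: Vk_def int_box_def)
qed

lemma dcube0_in_Sk_iff: "x \<in> dcube 0 z \<Longrightarrow> x \<in> Sk k \<longleftrightarrow> int_vec z \<in> Sk k"
  using dcube0_in_Vk_iff unfolding Sk_def by auto

lemma Vk_mono: "k \<le> k' \<Longrightarrow> Vk k \<subseteq> Vk k'"
proof
  fix x :: "real^'n" assume "k \<le> k'" "x \<in> Vk k"
  have "(2::real) ^ k \<le> 2 ^ k'" using \<open>k \<le> k'\<close> by simp
  then show "x \<in> Vk k'" using \<open>x \<in> Vk k\<close> unfolding Vk_def
    by (auto intro: order_trans[of _ "- (2 ^ k)"] less_le_trans)
qed

lemma Sk_subset_Vk: "Sk k \<subseteq> Vk k"
  unfolding Sk_def by auto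

lemma Sk_disjoint: "x \<in> Sk k \<Longrightarrow> x \<in> Sk k' \<Longrightarrow> k = k'"
proof (induction k k' rule: linorder_wlog)
  case (le a b)
  show ?case
  proof (rule ccontr)
    assume "a \<noteq> b"
    then have "a \<le> b - 1" using le by simp
    then have "x \<in> Vk (b - 1)" using le Sk_subset_Vk Vk_mono[of a "b - 1"] by blast
    then show False using le \<open>a \<noteq> b\<close> unfolding Sk_def by auto
  qed
qed (auto simp: eq_commute)

lemma dyadic_ancestor_bounds:
  fixes a :: int
  assumes "- (2 ^ k) \<le> a" "a < 2 ^ k" "l \<le> k"
  shows "- (2 ^ k) \<le> (a div 2 ^ l) * 2 ^ l" "(a div 2 ^ l + 1) * 2 ^ l \<le> 2 ^ k"
proof -
  define j where "j = a div 2 ^ l"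
  define b :: int where "b = 2 ^ l"
  define K :: int where "K = 2 ^ (k - l)"
  have b: "b > 0" unfolding b_def by simp
  have kb: "(2::int) ^ k = K * b" unfolding K_def b_def using assms(3) by (simp add: power_add[symmetric])
  have j: "j * b \<le> a" "a < (j + 1) * b" using div_pow2_eq_iff[of j a l] unfolding j_def b_def by auto
  have "- K * b < (j + 1) * b" using assms(1) j(2) kb by simp
  then have "- K \<le> j" using b mult_less_cancel_right_pos[of b "- K" "j + 1"] by simp
  then have "- K * b \<le> j * b" using b mult_right_mono[of "- K" j b] by simp
  then show "- (2 ^ k) \<le> (a div 2 ^ l) * 2 ^ l" using kb unfolding j_def b_def by simp
  have "j * b < K * b" using j(1) assms(2) kb by simp
  then have "j + 1 \<le> K" using b mult_less_cancel_right_pos[of b j K] by simp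
  then have "(j + 1) * b \<le> K * b" using b mult_right_mono[of "j + 1" K b] by simp
  then show "(a div 2 ^ l + 1) * 2 ^ l \<le> 2 ^ k" using kb unfolding j_def b_def by simp
qed

lemma ancestor_in_perc_index:
  assumes "z \<in> int_box k" "l \<le> k"
  shows "(k, l, ancestor l z) \<in> (perc_index :: (nat \<times> nat \<times> ('n::finite \<Rightarrow> int)) set)"
proof -
  have "x \<in> Vk k" if x: "x \<in> dcube l (ancestor l z)" for x :: "real^'n"
    unfolding Vk_def
  proof safe
    fix i
    have b: "- (2 ^ k) \<le> (z i div 2 ^ l) * 2 ^ l" "(z i div 2 ^ l + 1) * 2 ^ l \<le> 2 ^ k"
      using dyadic_ancestor_bounds[of k "z i" l] assms unfolding int_box_def by auto
    have "real_of_int (- (2 ^ k)) \<le> real_of_int ((z i div 2 ^ l) * 2 ^ l)"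
      using b(1) by (subst of_int_le_iff)
    then have r1: "- (2 ^ k) \<le> real_of_int (z i div 2 ^ l) * 2 ^ l" by simp
    have "real_of_int ((z i div 2 ^ l + 1) * 2 ^ l) \<le> real_of_int (2 ^ k)"
      using b(2) by (subst of_int_le_iff)
    then have r2: "(real_of_int (z i div 2 ^ l) + 1) * 2 ^ l \<le> 2 ^ k" by simp
    have "real_of_int (z i div 2 ^ l) * 2 ^ l \<le> x $ i" "x $ i < (real_of_int (z i div 2 ^ l) + 1) * 2 ^ l"
      using x unfolding dcube_def ancestor_def by auto
    then show "- (2 ^ k) \<le> x $ i" "x $ i < 2 ^ k" using r1 r2 by linarith+
  qed
  then show ?thesis unfolding perc_index_def using assms(2) by auto
qed

text \<open>Ancestors that agree at one level agree at all higher ones, so this counts the levels below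
  the first common ancestor of \<open>x\<close> and \<open>y\<close> (if they have one of level \<open>\<le> k\<close>).\<close>

definition merge_level :: "nat \<Rightarrow> ('i \<Rightarrow> int) \<Rightarrow> ('i \<Rightarrow> int) \<Rightarrow> nat" where
  "merge_level k x y = card {l \<in> {..k}. ancestor l x \<noteq> ancestor l y}"

lemma merge_level_le:
  assumes "ancestor l x = ancestor l y"
  shows "merge_level k x y \<le> l"
proof -
  have "{l' \<in> {..k}. ancestor l' x \<noteq> ancestor l' y} \<subseteq> {..<l}"
    using ancestor_eq_mono[OF assms] by (auto simp: not_less[symmetric])
  then have "merge_level k x y \<le> card {..<l}"
    unfolding merge_level_def by (intro card_mono) auto
  then show ?thesis by simp
qed

lemma ancestor_merge_level_eq:
  assumes "ancestor n x = ancestor n y" "n \<le> k"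
  shows "ancestor (merge_level k x y) x = ancestor (merge_level k x y) y"
proof (rule ccontr)
  define h where "h = merge_level k x y"
  assume ne: "ancestor (merge_level k x y) x \<noteq> ancestor (merge_level k x y) y"
  have "h \<le> n" using merge_level_le[OF assms(1)] unfolding h_def .
  have "{..h} \<subseteq> {l \<in> {..k}. ancestor l x \<noteq> ancestor l y}"
  proof
    fix l assume "l \<in> {..h}"
    then have "ancestor l x \<noteq> ancestor l y"
      using ancestor_eq_mono[of l x y h] ne unfolding h_def by auto
    then show "l \<in> {l \<in> {..k}. ancestor l x \<noteq> ancestor l y}"
      using \<open>l \<in> {..h}\<close> \<open>h \<le> n\<close> assms(2) by simp
  qed
  then have "card {..h} \<le> h" unfolding h_def merge_level_def by (intro card_mono) auto
  then show False by simp
qed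

text \<open>Indices of \<open>U\<^sub>k(Q\<^sub>i\<^sup>(\<^sup>k\<^sup>)(z))\<close>, \<open>i = 1, \<dots>, k + 1\<close>: the ancestor of level \<open>k + 1 - i\<close>.\<close>

definition path_index :: "nat \<Rightarrow> ('i \<Rightarrow> int) \<Rightarrow> (nat \<times> nat \<times> ('i \<Rightarrow> int)) set" where
  "path_index k z = (\<lambda>l. (k, l, ancestor l z)) ` {..k}"

lemma finite_path_index: "finite (path_index k z)"
  unfolding path_index_def by simp

lemma card_path_index: "card (path_index k z) = k + 1"
  unfolding path_index_def by (subst card_image) (auto simp: inj_on_def)

lemma card_path_index_Un: "card (path_index k x \<union> path_index k y) = k + 1 + merge_level k x y"
proof -
  define B where "B = (\<lambda>l. (k, l, ancestor l y)) ` {l \<in> {..k}. ancestor l x \<noteq> ancestor l y}"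
  have "path_index k x \<union> path_index k y = path_index k x \<union> B"
    unfolding path_index_def B_def by (force simp: image_iff)
  moreover have "card (path_index k x \<union> B) = card (path_index k x) + card B"
    by (rule card_Un_disjoint) (auto simp: finite_path_index B_def path_index_def)
  moreover have "card B = merge_level k x y"
    unfolding B_def merge_level_def by (subst card_image) (auto simp: inj_on_def)
  ultimately show ?thesis using card_path_index by simp
qed

lemma path_index_subset_perc_index:
  "z \<in> int_box k \<Longrightarrow> path_index k (z :: 'n::finite \<Rightarrow> int) \<subseteq> perc_index"
  unfolding path_index_def using ancestor_in_perc_index by auto

subsection \<open>Covering numbers\<close>

lemma Nalpha_le:
  assumes "finite C" "A \<inter> Sk k \<subseteq> (\<Union>(l, j)\<in>C. dcube l j)"
  shows "Nalpha \<alpha> A k \<le> (\<Sum>(l, j)\<in>C. 2 powr (\<alpha> * (real l - real k - 1)))"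
  unfolding Nalpha_def
proof (rule cInf_lower)
  show "bdd_below {(\<Sum>(l, j)\<in>C. 2 powr (\<alpha> * (real l - real k - 1))) | C.
      finite C \<and> A \<inter> Sk k \<subseteq> (\<Union>(l, j)\<in>C. dcube l j)}"
    by (rule bdd_belowI[of _ 0]) (auto intro!: sum_nonneg)
qed (use assms in blast)

lemma Nalpha_ge:
  assumes "\<And>C. finite C \<Longrightarrow> A \<inter> Sk k \<subseteq> (\<Union>(l, j)\<in>C. dcube l j) \<Longrightarrow>
     B \<le> (\<Sum>(l, j)\<in>C. 2 powr (\<alpha> * (real l - real k - 1)))"
  shows "B \<le> Nalpha \<alpha> (A :: (real^'n::finite) set) k"
proof -
  have "A \<inter> Sk k \<subseteq> (\<Union>(l, j)\<in>(\<lambda>z. (0, z)) ` int_box k. dcube l j)"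
  proof
    fix x assume "x \<in> A \<inter> Sk k"
    define z where "z = (\<lambda>i. \<lfloor>x $ i\<rfloor>)"
    have xz: "x \<in> dcube 0 z" unfolding dcube_def z_def by simp
    have "x \<in> Vk k" using \<open>x \<in> A \<inter> Sk k\<close> Sk_subset_Vk by blast
    then have "z \<in> int_box k" by (simp add: dcube0_in_Vk_iff[OF xz] int_vec_in_Vk_iff)
    then show "x \<in> (\<Union>(l, j)\<in>(\<lambda>z. (0, z)) ` int_box k. dcube l j)" using xz by auto
  qed
  then have "{(\<Sum>(l, j)\<in>C. 2 powr (\<alpha> * (real l - real k - 1))) | C.
      finite C \<and> A \<inter> Sk k \<subseteq> (\<Union>(l, j)\<in>C. dcube l j)} \<noteq> {}"
    using finite_int_box by blast
  then show ?thesis unfolding Nalpha_def by (rule cInf_greatest) (use assms in blast)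
qed

lemma Nalpha_nonneg: "0 \<le> Nalpha \<alpha> (A :: (real^'n::finite) set) k"
  by (rule Nalpha_ge) (auto intro!: sum_nonneg)

text \<open>Only \<open>min 1 N\<^sub>\<alpha>\<close> is antitone in \<open>\<alpha>\<close>: cubes of level \<open>> k + 1\<close> weigh more than \<open>1\<close>.\<close>

lemma Nalpha_antimono:
  assumes "0 < \<alpha>" "\<alpha> \<le> q"
  shows "min 1 (Nalpha q A k) \<le> Nalpha \<alpha> (A :: (real^'n::finite) set) k"
proof (rule Nalpha_ge)
  fix C assume C: "finite C" "A \<inter> Sk k \<subseteq> (\<Union>(l, j)\<in>C. dcube l j)"
  show "min 1 (Nalpha q A k) \<le> (\<Sum>(l, j)\<in>C. 2 powr (\<alpha> * (real l - real k - 1)))"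
  proof (cases "\<exists>(l, j)\<in>C. k + 1 < l")
    case True
    then obtain l j where c: "(l, j) \<in> C" "k + 1 < l" by blast
    have "1 \<le> 2 powr (\<alpha> * (real l - real k - 1))"
      using c(2) assms(1) by (intro ge_one_powr_ge_zero) auto
    also have "\<dots> \<le> (\<Sum>(l, j)\<in>C. 2 powr (\<alpha> * (real l - real k - 1)))"
      using member_le_sum[of "(l, j)" C "\<lambda>(l, j). 2 powr (\<alpha> * (real l - real k - 1))"] c C(1)
      by auto
    finally show ?thesis by simp
  next
    case False
    have "Nalpha q A k \<le> (\<Sum>(l, j)\<in>C. 2 powr (q * (real l - real k - 1)))"
      by (rule Nalpha_le[OF C])
    also have "\<dots> \<le> (\<Sum>(l, j)\<in>C. 2 powr (\<alpha> * (real l - real k - 1)))"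
    proof (rule sum_mono, clarify)
      fix l j assume "(l, j) \<in> C"
      then have "real l - real k - 1 \<le> 0" using False by auto
      then show "2 powr (q * (real l - real k - 1)) \<le> 2 powr (\<alpha> * (real l - real k - 1))"
        using assms by (simp add: mult_right_mono_neg)
    qed
    finally show ?thesis by simp
  qed
qed

lemma summable_Nalpha_mono:
  assumes "summable (\<lambda>k. Nalpha \<alpha> A (Suc k))" "0 < \<alpha>" "\<alpha> \<le> q"
  shows "summable (\<lambda>k. Nalpha q (A :: (real^'n::finite) set) (Suc k))"
proof (rule summable_comparison_test_ev[OF _ assms(1)])
  have "eventually (\<lambda>k. Nalpha \<alpha> A (Suc k) < 1) sequentially"
    using summable_LIMSEQ_zero[OF assms(1)] by (rule order_tendstoD) simp
  then show "eventually (\<lambda>k. norm (Nalpha q A (Suc k)) \<le> Nalpha \<alpha> A (Suc k)) sequentially"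
  proof eventually_elim
    case (elim k)
    then show ?case
      using Nalpha_antimono[OF assms(2,3), of A "Suc k"] Nalpha_nonneg[of q A "Suc k"] by auto
  qed
qed

text \<open>Rational exponents suffice, so the hypotheses are needed almost surely for countably many
  exponents only.\<close>

lemma DimH_eqI:
  assumes "0 \<le> \<theta>"
    and upper: "\<And>r. r \<in> \<rat> \<Longrightarrow> \<theta> < r \<Longrightarrow> summable (\<lambda>k. Nalpha r A (Suc k))"
    and lower: "\<And>r. r \<in> \<rat> \<Longrightarrow> 0 < r \<Longrightarrow> r < \<theta> \<Longrightarrow> \<not> summable (\<lambda>k. Nalpha r A (Suc k))"
  shows "DimH (A :: (real^'n::finite) set) = \<theta>"
proof -
  define S where "S = {\<alpha>. \<alpha> > 0 \<and> summable (\<lambda>k. Nalpha \<alpha> A (Suc k))}"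
  have in_S: "\<alpha> \<in> S" if "\<theta> < \<alpha>" for \<alpha>
  proof -
    obtain r where "r \<in> \<rat>" "\<theta> < r" "r < \<alpha>" using Rats_dense_in_real[OF \<open>\<theta> < \<alpha>\<close>] by blast
    then show ?thesis
      using upper summable_Nalpha_mono[of r A \<alpha>] \<open>0 \<le> \<theta>\<close> unfolding S_def by auto
  qed
  have above: "\<theta> \<le> \<alpha>" if "\<alpha> \<in> S" for \<alpha>
  proof (rule ccontr)
    assume "\<not> \<theta> \<le> \<alpha>"
    then obtain r where "r \<in> \<rat>" "\<alpha> < r" "r < \<theta>" using Rats_dense_in_real[of \<alpha> \<theta>] by auto
    then show False
      using that lower summable_Nalpha_mono[of \<alpha> A r] unfolding S_def by auto
  qed
  have "Inf S = \<theta>"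
  proof (rule antisym)
    show "Inf S \<le> \<theta>"
    proof (rule field_le_epsilon)
      fix e :: real assume "0 < e"
      then show "Inf S \<le> \<theta> + e"
        using in_S by (intro cInf_lower) (auto simp: S_def intro!: bdd_belowI[of _ 0])
    qed
    show "\<theta> \<le> Inf S"
      using in_S[of "\<theta> + 1"] above by (intro cInf_greatest) auto
  qed
  then show ?thesis unfolding DimH_def S_def .
qed

subsection \<open>Energy and pair counting\<close>

lemma le_add_square_divide:
  fixes a c :: real
  assumes "0 < c"
  shows "a \<le> c + a\<^sup>2 / (4 * c)"
proof -
  have "0 \<le> (a - 2 * c)\<^sup>2" by simp
  then have "a * (4 * c) \<le> (c + a\<^sup>2 / (4 * c)) * (4 * c)"
    using assms by (simp add: power2_eq_square algebra_simps)
  then show ?thesis using assms by simp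
qed

lemma sq_card_le_energy:
  fixes s :: real
  assumes "finite R" "Q \<subseteq> R" "\<And>x. x \<in> Q \<Longrightarrow> ancestor l x = j" "1 \<le> s"
  shows "(real (card Q))\<^sup>2 * s ^ (k + 1 - l) \<le> (\<Sum>x\<in>Q. \<Sum>y\<in>R. s ^ (k + 1 - merge_level k x y))"
proof -
  have "(real (card Q))\<^sup>2 * s ^ (k + 1 - l) = (\<Sum>x\<in>Q. \<Sum>y\<in>Q. s ^ (k + 1 - l))"
    by (simp add: power2_eq_square)
  also have "\<dots> \<le> (\<Sum>x\<in>Q. \<Sum>y\<in>Q. s ^ (k + 1 - merge_level k x y))"
  proof (intro sum_mono power_increasing)
    fix x y assume "x \<in> Q" "y \<in> Q"
    then have "merge_level k x y \<le> l" using assms(3) by (intro merge_level_le) simp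
    then show "k + 1 - l \<le> k + 1 - merge_level k x y" by simp
  qed (use assms(4) in simp)
  also have "\<dots> \<le> (\<Sum>x\<in>Q. \<Sum>y\<in>R. s ^ (k + 1 - merge_level k x y))"
    using assms by (intro sum_mono sum_mono2) auto
  finally show ?thesis .
qed

text \<open>Charge each point of \<open>R\<close> to a cube containing it. A cube of weight \<open>w\<close> charged with \<open>m\<close>
  points satisfies \<open>m \<le> t w + m\<^sup>2 / (4 t w)\<close> (AM-GM), and \<open>m\<^sup>2 / w\<close> is at most the energy of
  those points because their ancestors agree from the level of the cube on.\<close>

lemma card_le_cover_cost_add_energy:
  fixes R :: "('i \<Rightarrow> int) set" and C :: "(nat \<times> ('i \<Rightarrow> int)) set"
  assumes "finite R" "finite C" "0 < q" "0 < t"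
    and cover: "\<And>x. x \<in> R \<Longrightarrow> \<exists>l. (l, ancestor l x) \<in> C"
    and level: "\<And>l j. (l, j) \<in> C \<Longrightarrow> l \<le> k + 1"
  shows "real (card R) \<le> t * (\<Sum>(l, j)\<in>C. 2 powr (q * (real l - real k - 1)))
     + 1 / (4 * t) * (\<Sum>x\<in>R. \<Sum>y\<in>R. (2 powr q) ^ (k + 1 - merge_level k x y))"
proof -
  define w :: "nat \<times> ('i \<Rightarrow> int) \<Rightarrow> real"
    where "w = (\<lambda>(l, j). 2 powr (q * (real l - real k - 1)))"
  define E where "E = (\<lambda>Q. \<Sum>x\<in>Q. \<Sum>y\<in>R. (2 powr q) ^ (k + 1 - merge_level k x y))"
  have "\<forall>x\<in>R. \<exists>c. c \<in> C \<and> snd c = ancestor (fst c) x"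
    using cover by fastforce
  then obtain f where f: "\<And>x. x \<in> R \<Longrightarrow> f x \<in> C \<and> snd (f x) = ancestor (fst (f x)) x"
    by metis
  define Q where "Q = (\<lambda>c. {x \<in> R. f x = c})"
  have cube: "real (card (Q c)) \<le> t * w c + 1 / (4 * t) * E (Q c)" if "c \<in> f ` R" for c
  proof -
    obtain l j where c: "c = (l, j)" by (cases c)
    have "c \<in> C" using that f by auto
    have w: "0 < w c" "1 / w c = (2 powr q) ^ (k + 1 - l)"
      using level[of l j] c \<open>c \<in> C\<close>
      by (auto simp: w_def powr_minus_divide[symmetric] powr_realpow[symmetric] powr_powr
          algebra_simps)
    have "ancestor l x = j" if "x \<in> Q c" for x
      using that f c unfolding Q_def by force
    then have "(real (card (Q c)))\<^sup>2 * (1 / w c) \<le> E (Q c)"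
      unfolding w(2) E_def using assms(3)
      by (intro sq_card_le_energy[OF assms(1)]) (auto simp: Q_def intro: ge_one_powr_ge_zero)
    then have "(real (card (Q c)))\<^sup>2 / (4 * (t * w c)) \<le> 1 / (4 * t) * E (Q c)"
      using assms(4) w(1) by (simp add: field_simps)
    then show ?thesis
      using le_add_square_divide[of "t * w c" "real (card (Q c))"] assms(4) w(1) by simp
  qed
  have "real (card R) = (\<Sum>c\<in>f ` R. real (card (Q c)))"
    unfolding Q_def using card_eq_sum sum.image_gen[OF assms(1), of "\<lambda>_. 1::real" f] by simp
  also have "\<dots> \<le> (\<Sum>c\<in>f ` R. t * w c + 1 / (4 * t) * E (Q c))"
    using cube by (rule sum_mono)
  also have "\<dots> = t * (\<Sum>c\<in>f ` R. w c) + 1 / (4 * t) * E R"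
    unfolding E_def Q_def sum.distrib sum_distrib_left[symmetric]
    by (simp add: sum.image_gen[OF assms(1), symmetric])
  also have "(\<Sum>c\<in>f ` R. w c) \<le> (\<Sum>c\<in>C. w c)"
    using f assms(2) by (intro sum_mono2) (auto simp: w_def)
  finally show ?thesis
    using assms(4) unfolding w_def E_def by (simp add: mult_left_mono)
qed

lemma cover_cost_ge:
  fixes R :: "('i \<Rightarrow> int) set" and C :: "(nat \<times> ('i \<Rightarrow> int)) set"
  assumes "finite R" "finite C" "0 < q" "1 \<le> T" "0 < m"
    and count: "m / 2 \<le> real (card R)"
    and energy: "(\<Sum>x\<in>R. \<Sum>y\<in>R. (2 powr q) ^ (k + 1 - merge_level k x y)) \<le> T * m\<^sup>2"
    and cover: "\<And>x. x \<in> R \<Longrightarrow> \<exists>l. (l, ancestor l x) \<in> C"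
  shows "1 / (4 * T) \<le> (\<Sum>(l, j)\<in>C. 2 powr (q * (real l - real k - 1)))"
proof (cases "\<exists>(l, j)\<in>C. k + 1 < l")
  case True
  then obtain l j where c: "(l, j) \<in> C" "k + 1 < l" by blast
  have "1 / (4 * T) \<le> 1" using assms(4) by simp
  also have "1 \<le> 2 powr (q * (real l - real k - 1))"
    using c(2) assms(3) by (intro ge_one_powr_ge_zero) auto
  also have "\<dots> \<le> (\<Sum>(l, j)\<in>C. 2 powr (q * (real l - real k - 1)))"
    using member_le_sum[of "(l, j)" C "\<lambda>(l, j). 2 powr (q * (real l - real k - 1))"] c assms(2)
    by auto
  finally show ?thesis .
next
  case False
  define W where "W = (\<Sum>(l, j)\<in>C. 2 powr (q * (real l - real k - 1)))"
  have "real (card R) \<le> (m * T) * W + 1 / (4 * (m * T))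
      * (\<Sum>x\<in>R. \<Sum>y\<in>R. (2 powr q) ^ (k + 1 - merge_level k x y))"
    unfolding W_def using assms(4,5) cover False
    by (intro card_le_cover_cost_add_energy[OF assms(1,2,3)]) auto
  also have "\<dots> \<le> (m * T) * W + 1 / (4 * (m * T)) * (T * m\<^sup>2)"
    using energy assms(4,5) by (intro add_left_mono mult_left_mono) auto
  finally have "m / 2 \<le> (m * T) * W + 1 / (4 * (m * T)) * (T * m\<^sup>2)"
    using count by linarith
  also have "\<dots> = m * (T * W + 1 / 4)"
    using assms(4,5) by (simp add: power2_eq_square field_simps)
  finally have "1 / 4 \<le> T * W"
    using assms(5) by (simp add: field_simps)
  then show ?thesis
    unfolding W_def[symmetric] using assms(4) by (simp add: field_simps)
qed

lemma sum_merge_level_le: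
  fixes f :: "nat \<Rightarrow> real"
  assumes "\<And>h. 0 \<le> f h" "n \<le> k"
  shows "(\<Sum>x\<in>{z::'i::finite \<Rightarrow> int. ancestor n z = e}. \<Sum>y\<in>{z. ancestor n z = e}. f (merge_level k x y))
    \<le> (\<Sum>h\<le>n. f h * real (card {z::'i \<Rightarrow> int. ancestor n z = e}) * (2 ^ CARD('i)) ^ h)"
proof -
  define T where "T = {z::'i \<Rightarrow> int. ancestor n z = e}"
  define same :: "nat \<Rightarrow> ('i \<Rightarrow> int) \<Rightarrow> ('i \<Rightarrow> int) \<Rightarrow> real"
    where "same = (\<lambda>h x y. if ancestor h x = ancestor h y then 1 else (0::real))"
  have T: "finite T" unfolding T_def by (rule finite_ancestor_fiber)
  have "f (merge_level k x y) \<le> (\<Sum>h\<le>n. f h * same h x y)" if "x \<in> T" "y \<in> T" for x y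
  proof -
    have "ancestor n x = ancestor n y" using that unfolding T_def by simp
    then have "merge_level k x y \<le> n" "same (merge_level k x y) x y = 1"
      using merge_level_le ancestor_merge_level_eq assms(2) unfolding same_def by auto
    then show ?thesis
      using member_le_sum[of "merge_level k x y" "{..n}" "\<lambda>h. f h * same h x y"] assms(1)
      by (auto simp: same_def)
  qed
  then have "(\<Sum>x\<in>T. \<Sum>y\<in>T. f (merge_level k x y)) \<le> (\<Sum>x\<in>T. \<Sum>y\<in>T. \<Sum>h\<le>n. f h * same h x y)"
    by (intro sum_mono) auto
  also have "\<dots> = (\<Sum>h\<le>n. f h * (\<Sum>x\<in>T. \<Sum>y\<in>T. same h x y))"
    by (simp add: sum_distrib_left sum.swap[of _ "{..n}"])
  also have "\<dots> \<le> (\<Sum>h\<le>n. f h * (\<Sum>x\<in>T. (2 ^ CARD('i)) ^ h))"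
  proof (intro sum_mono mult_left_mono assms(1))
    fix h x
    have "(\<Sum>y\<in>T. same h x y) = real (card {y \<in> T. ancestor h y = ancestor h x})"
      using T by (simp add: same_def sum.inter_filter[symmetric] eq_commute)
    also have "card {y \<in> T. ancestor h y = ancestor h x} \<le> card {y::'i \<Rightarrow> int. ancestor h y = ancestor h x}"
      by (intro card_mono finite_ancestor_fiber) auto
    finally show "(\<Sum>y\<in>T. same h x y) \<le> (2 ^ CARD('i)) ^ h"
      by (simp add: card_ancestor_fiber power_mult[symmetric] mult.commute)
  qed
  finally show ?thesis unfolding T_def by (simp add: mult.assoc mult.left_commute)
qed

text \<open>The left-hand side is the expected \<open>s\<close>-energy of the cubes retained at stage \<open>n + 1\<close> in a
  dyadic cube of level \<open>n\<close>; grouping pairs by merge level gives a geometric series in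
  \<open>s / (2\<^sup>d p)\<close>.\<close>

lemma pair_sum_le:
  fixes p s :: real and e :: "'i::finite \<Rightarrow> int"
  assumes "0 < p" "1 \<le> s" "s < 2 ^ CARD('i) * p"
  shows "(\<Sum>x\<in>{z. ancestor n z = e}. \<Sum>y\<in>{z. ancestor n z = e}.
      p ^ (n + 2 + merge_level (Suc n) x y) * s ^ (n + 2 - merge_level (Suc n) x y))
    \<le> s\<^sup>2 / (p\<^sup>2 * (1 - s / (2 ^ CARD('i) * p)))
      * (real (card {z. ancestor n z = e}) * p ^ (n + 2))\<^sup>2"
proof -
  define T where "T = {z. ancestor n z = e}"
  define a :: real where "a = 2 ^ CARD('i)"
  define r where "r = s / (a * p)"
  have a: "0 < a" and r: "0 < r" "r < 1"
    using assms(1-3) unfolding a_def r_def by (auto simp: field_simps)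
  have card: "real (card T) = a ^ n"
    unfolding T_def a_def card_ancestor_fiber by (simp add: power_mult[symmetric] mult.commute)
  have summand: "p ^ (n + 2 + h) * s ^ (n + 2 - h) * a ^ n * a ^ h
      = (a ^ n * p ^ (n + 2))\<^sup>2 * (s / p)\<^sup>2 * r ^ (n - h)" if "h \<le> n" for h
  proof -
    obtain j where n: "n = h + j" using \<open>h \<le> n\<close> le_Suc_ex by blast
    show ?thesis
      unfolding n r_def using a assms(1)
      by (simp add: power_add field_simps) (rule disjI2, algebra)
  qed
  have "(\<Sum>x\<in>T. \<Sum>y\<in>T. p ^ (n + 2 + merge_level (Suc n) x y) * s ^ (n + 2 - merge_level (Suc n) x y))
      \<le> (\<Sum>h\<le>n. p ^ (n + 2 + h) * s ^ (n + 2 - h) * real (card T) * a ^ h)"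
    unfolding T_def a_def using assms(1,2) by (intro sum_merge_level_le) auto
  also have "\<dots> = (a ^ n * p ^ (n + 2))\<^sup>2 * (s / p)\<^sup>2 * (\<Sum>h\<le>n. r ^ (n - h))"
    unfolding card sum_distrib_left by (intro sum.cong refl summand) simp
  also have "(\<Sum>h\<le>n. r ^ (n - h)) = (\<Sum>j\<in>(\<lambda>h. n - h) ` {..n}. r ^ j)"
    by (subst sum.reindex) (auto simp: inj_on_def)
  also have "\<dots> \<le> 1 / (1 - r)"
    using r by (intro less_imp_le geometric_sum_less) auto
  finally have "(\<Sum>x\<in>T. \<Sum>y\<in>T. p ^ (n + 2 + merge_level (Suc n) x y) * s ^ (n + 2 - merge_level (Suc n) x y))
      \<le> (a ^ n * p ^ (n + 2))\<^sup>2 * (s / p)\<^sup>2 * (1 / (1 - r))"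
    by (simp add: mult_left_mono)
  also have "\<dots> = s\<^sup>2 / (p\<^sup>2 * (1 - s / (2 ^ CARD('i) * p))) * (real (card T) * p ^ (n + 2))\<^sup>2"
    unfolding card r_def a_def by (simp add: power_divide)
  finally show ?thesis by (simp only: T_def)
qed

text \<open>The unit cubes of the dyadic cube \<open>[2\<^sup>n, 2\<^sup>n\<^sup>+\<^sup>1) \<times> [0, 2\<^sup>n)\<^sup>d\<^sup>-\<^sup>1\<close> of the shell \<open>S\<^sub>n\<^sub>+\<^sub>1\<close>,
  the coordinate \<open>undefined\<close> serving as the distinguished first one.\<close>

definition corner_block :: "nat \<Rightarrow> ('i \<Rightarrow> int) set" where
  "corner_block n = {z. ancestor n z = (\<lambda>m. if m = undefined then 1 else 0)}"

lemma finite_corner_block: "finite (corner_block n :: ('i::finite \<Rightarrow> int) set)"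
  unfolding corner_block_def by (rule finite_ancestor_fiber)

lemma card_corner_block: "card (corner_block n :: ('i::finite \<Rightarrow> int) set) = (2 ^ n) ^ CARD('i)"
  unfolding corner_block_def by (rule card_ancestor_fiber)

lemma corner_block_in_shell:
  assumes "z \<in> corner_block n"
  shows "z \<in> int_box (Suc n)" "int_vec (z :: 'n::finite \<Rightarrow> int) \<in> Sk (Suc n)"
proof -
  have z: "(if i = undefined then 1 else 0) * 2 ^ n \<le> z i
      \<and> z i < ((if i = undefined then 1 else 0) + 1) * 2 ^ n" for i
    using assms div_pow2_eq_iff[of "if i = undefined then 1 else 0" "z i" n]
    unfolding corner_block_def ancestor_def fun_eq_iff by simp
  have "- (2 ^ Suc n) \<le> z i \<and> z i < 2 ^ Suc n" for i
    using z[of i] by (cases "i = undefined") auto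
  then show "z \<in> int_box (Suc n)" unfolding int_box_def by simp
  moreover have "z \<notin> int_box n"
    using z[of undefined] unfolding int_box_def by (auto intro!: exI[of _ undefined])
  ultimately show "int_vec z \<in> Sk (Suc n)"
    by (simp add: Sk_def int_vec_in_Vk_iff)
qed

definition block_mean :: "nat \<Rightarrow> real \<Rightarrow> nat \<Rightarrow> real" where
  "block_mean d p n = (2 ^ n) ^ d * p ^ (n + 2)"

definition moment_bound :: "nat \<Rightarrow> real \<Rightarrow> real \<Rightarrow> real" where
  "moment_bound d p s = s\<^sup>2 / (p\<^sup>2 * (1 - s / (2 ^ d * p)))"

lemma block_mean_pos: "0 < p \<Longrightarrow> 0 < block_mean d p n"
  unfolding block_mean_def by simp

lemma moment_bound_ge_1:
  assumes "0 < p" "p \<le> 1" "1 \<le> s" "s < 2 ^ d * p"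
  shows "1 \<le> moment_bound d p s"
proof -
  have "0 < 1 - s / (2 ^ d * p)" "1 - s / (2 ^ d * p) \<le> 1"
    using assms by auto
  moreover have "p\<^sup>2 \<le> 1" using assms(1,2) by (simp add: power_le_one)
  ultimately have "p\<^sup>2 * (1 - s / (2 ^ d * p)) \<le> 1" "0 < p\<^sup>2 * (1 - s / (2 ^ d * p))"
    using assms(1) by (auto intro: mult_le_one)
  moreover have "1 \<le> s\<^sup>2" using assms(3) by simp
  ultimately show ?thesis unfolding moment_bound_def by (simp add: le_divide_eq)
qed

subsection \<open>Probabilistic tools\<close>

lemma (in prob_space) prob_ge_of_second_moment:
  fixes X Y :: "'a \<Rightarrow> real"
  assumes "integrable M X" "integrable M (\<lambda>\<omega>. (X \<omega>)\<^sup>2)" "integrable M Y"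
    and "\<And>\<omega>. 0 \<le> X \<omega>" "\<And>\<omega>. 0 \<le> Y \<omega>"
    and "1 \<le> expectation X" "expectation (\<lambda>\<omega>. (X \<omega>)\<^sup>2) \<le> K2" "expectation Y \<le> K3"
    and "0 < K2" "0 < K3"
  shows "1 / (8 * K2) \<le> prob {\<omega> \<in> space M. 1 / 2 \<le> X \<omega> \<and> Y \<omega> \<le> 8 * K2 * K3}"
proof -
  define A where "A = {\<omega> \<in> space M. 1 / 2 \<le> X \<omega> \<and> Y \<omega> \<le> 8 * K2 * K3}"
  have A: "A \<in> events"
    using assms(1,3) unfolding A_def by measurable
  text \<open>Pointwise: \<open>X \<le> 1/2\<close> off \<open>{X \<ge> 1/2}\<close>, \<open>X \<le> K2 + X\<^sup>2/(4 K2)\<close> on it, and the excess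
    \<open>K2\<close> outside \<open>A\<close> is paid by \<open>Y / (8 K3)\<close>.\<close>
  have pointwise: "X \<omega> \<le> 1 / 2 + K2 * indicator A \<omega> + (X \<omega>)\<^sup>2 / (4 * K2) + Y \<omega> / (8 * K3)"
    if "\<omega> \<in> space M" for \<omega>
  proof -
    have "X \<omega> \<le> K2 + (X \<omega>)\<^sup>2 / (4 * K2)" using le_add_square_divide assms(9) by blast
    moreover have "0 \<le> Y \<omega> / (8 * K3)" "0 \<le> (X \<omega>)\<^sup>2 / (4 * K2)" "0 \<le> K2 * indicator A \<omega>"
      using assms(5,9,10) by auto
    moreover have "K2 \<le> Y \<omega> / (8 * K3)" if "1 / 2 \<le> X \<omega>" "\<omega> \<notin> A"
      using that \<open>\<omega> \<in> space M\<close> assms(9,10) unfolding A_def by (auto simp: field_simps)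
    ultimately show ?thesis by (cases "\<omega> \<in> A"; cases "1 / 2 \<le> X \<omega>") auto
  qed
  have iA: "integrable M (indicator A :: 'a \<Rightarrow> real)"
    using A by (simp add: emeasure_eq_measure)
  have "1 \<le> expectation X" by fact
  also have "\<dots> \<le> expectation (\<lambda>\<omega>. 1 / 2 + K2 * indicator A \<omega> + (X \<omega>)\<^sup>2 / (4 * K2) + Y \<omega> / (8 * K3))"
    using pointwise assms(1-3) iA by (intro integral_mono) auto
  also have "\<dots> = 1 / 2 + K2 * prob A + expectation (\<lambda>\<omega>. (X \<omega>)\<^sup>2) / (4 * K2) + expectation Y / (8 * K3)"
    using iA assms(2,3) A by (simp add: prob_space Int_absorb2 sets.sets_into_space)
  also have "\<dots> \<le> 1 / 2 + K2 * prob A + 1 / 4 + 1 / 8"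
    using assms(7-10) by (intro add_mono) (auto simp: field_simps)
  finally show ?thesis using assms(9) unfolding A_def by (simp add: field_simps)
qed

lemma (in prob_space) AE_infinite_of_indep_events:
  fixes A :: "nat \<Rightarrow> 'a set"
  assumes "indep_events A UNIV" "0 < c" "\<And>n. c \<le> prob (A n)"
  shows "AE \<omega> in M. infinite {n. \<omega> \<in> A n}"
proof -
  have A: "A n \<in> events" for n using assms(1) by (auto simp: indep_events_def)
  then have "(\<lambda>n. {\<omega> \<in> space M. \<omega> \<in> A n}) = A"
    by (auto simp: fun_eq_iff dest: sets.sets_into_space)
  then have "(AE \<omega> in M. infinite {n. \<omega> \<in> A n}) \<or> (AE \<omega> in M. finite {n. \<omega> \<in> A n})"
    using borel_0_1_law_AE[where P = "\<lambda>n \<omega>. \<omega> \<in> A n"] assms(1) by simp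
  moreover have "\<not> (AE \<omega> in M. finite {n. \<omega> \<in> A n})"
  proof
    define L where "L = (\<lambda>n. \<Union>m\<in>{n..}. A m)"
    have L: "L n \<in> events" for n unfolding L_def using A by auto
    have "(\<lambda>n. prob (L n)) \<longlonglongrightarrow> prob (\<Inter>n. L n)"
      using L by (intro finite_Lim_measure_decseq) (auto simp: L_def decseq_def intro: order_trans)
    moreover have "c \<le> prob (L n)" for n
      using assms(3)[of n] finite_measure_mono[of "A n" "L n"] L A unfolding L_def by force
    ultimately have "c \<le> prob (\<Inter>n. L n)" by (intro LIMSEQ_le_const) auto
    assume "AE \<omega> in M. finite {n. \<omega> \<in> A n}"
    then have "AE \<omega> in M. \<omega> \<notin> (\<Inter>n. L n)"
    proof eventually_elim
      case (elim \<omega>)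
      then obtain N where "\<forall>m\<in>{n. \<omega> \<in> A n}. m < N" using finite_nat_bounded by blast
      then have "\<omega> \<notin> L N" unfolding L_def by auto
      then show ?case by blast
    qed
    then have "prob (\<Inter>n. L n) = 0" using L by (subst prob_eq_0) auto
    then show False using \<open>c \<le> prob (\<Inter>n. L n)\<close> assms(2) by simp
  qed
  ultimately show ?thesis by blast
qed

lemma (in prob_space) integrable_sum_indicator:
  assumes "finite I" "\<And>i. i \<in> I \<Longrightarrow> A i \<in> events"
  shows "integrable M (\<lambda>\<omega>. \<Sum>i\<in>I. indicator (A i) \<omega> * (c i :: real))"
  using assms by (intro Bochner_Integration.integrable_sum integrable_mult_left)
    (simp add: emeasure_eq_measure)

lemma (in prob_space) expectation_sum_indicator:
  assumes "finite I" "\<And>i. i \<in> I \<Longrightarrow> A i \<in> events"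
  shows "expectation (\<lambda>\<omega>. \<Sum>i\<in>I. indicator (A i) \<omega> * (c i :: real)) = (\<Sum>i\<in>I. prob (A i) * c i)"
  using assms
  by (subst Bochner_Integration.integral_sum) (auto simp: emeasure_eq_measure)

subsection \<open>Fractal percolation\<close>

locale fractal_percolation = prob_space M for M :: "'a measure" +
  fixes U :: "nat \<times> nat \<times> ('n::finite \<Rightarrow> int) \<Rightarrow> 'a \<Rightarrow> real" and p :: real
  assumes U_measurable: "\<And>i. i \<in> perc_index \<Longrightarrow> U i \<in> borel_measurable M"
    and U_uniform: "\<And>i. i \<in> perc_index \<Longrightarrow> distr M lborel (U i) = uniform_measure lborel {0<..<1}"
    and U_indep: "indep_vars (\<lambda>_. borel) U perc_index"
    and p_pos: "0 < p" and p_le_1: "p \<le> 1"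
begin

lemma prob_U_less: "i \<in> perc_index \<Longrightarrow> prob (U i -` {..<p} \<inter> space M) = p"
proof -
  assume i: "i \<in> perc_index"
  have "prob (U i -` {..<p} \<inter> space M) = measure (distr M lborel (U i)) {..<p}"
    using U_measurable[OF i] by (intro measure_distr[symmetric]) auto
  also have "\<dots> = measure lborel ({0<..<1} \<inter> {..<p}) / measure lborel {0<..<1::real}"
    unfolding U_uniform[OF i] by (rule measure_uniform_measure) auto
  also have "{0<..<1} \<inter> {..<p} = {0<..<p}" using p_le_1 by auto
  finally show ?thesis using p_pos by simp
qed

definition survives :: "(nat \<times> nat \<times> ('n \<Rightarrow> int)) set \<Rightarrow> 'a set" where
  "survives J = {\<omega> \<in> space M. \<forall>i\<in>J. U i \<omega> < p}"

lemma survives_measurable: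
  assumes "finite J" "space N = space M" "\<And>i. i \<in> J \<Longrightarrow> U i \<in> borel_measurable N"
  shows "survives J \<in> sets N"
proof -
  have "survives J = {\<omega> \<in> space N. \<forall>i\<in>J. U i \<omega> < p}"
    unfolding survives_def assms(2) ..
  also have "\<dots> \<in> sets N"
    using assms(1,3) by measurable
  finally show ?thesis .
qed

lemma prob_survives:
  assumes "finite J" "J \<subseteq> perc_index"
  shows "prob (survives J) = p ^ card J"
proof (cases "J = {}")
  case True
  then show ?thesis by (simp add: survives_def prob_space)
next
  case False
  have indep: "indep_sets (\<lambda>i. {U i -` A \<inter> space M | A. A \<in> sets borel}) perc_index"
    using U_indep unfolding indep_vars_def2 by simp
  have "survives J = (\<Inter>i\<in>J. U i -` {..<p} \<inter> space M)"
    unfolding survives_def using False by auto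
  also have "prob \<dots> = (\<Prod>i\<in>J. prob (U i -` {..<p} \<inter> space M))"
    by (rule indep_setsD[OF indep assms(2) False assms(1)]) (auto intro!: exI[of _ "{..<p}"])
  also have "\<dots> = (\<Prod>i\<in>J. p)"
    using assms(2) prob_U_less by (intro prod.cong) auto
  also have "\<dots> = p ^ card J" by simp
  finally show ?thesis .
qed

abbreviation retained :: "nat \<Rightarrow> ('n \<Rightarrow> int) \<Rightarrow> 'a set" where
  "retained k z \<equiv> survives (path_index k z)"

lemma mem_retained_iff:
  "\<omega> \<in> retained k z \<longleftrightarrow> \<omega> \<in> space M \<and> (\<forall>l\<le>k. U (k, l, ancestor l z) \<omega> < p)"
  unfolding survives_def path_index_def by auto

lemma retained_measurable:
  assumes "space N = space M" "\<And>i. i \<in> perc_index \<Longrightarrow> fst i = k \<Longrightarrow> U i \<in> borel_measurable N"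
    and "z \<in> int_box k"
  shows "retained k z \<in> sets N"
  using path_index_subset_perc_index[OF assms(3)] assms(2)
  by (intro survives_measurable[OF finite_path_index assms(1)]) (auto simp: path_index_def)

lemma retained_in_events: "z \<in> int_box k \<Longrightarrow> retained k z \<in> events"
  using U_measurable by (intro retained_measurable) auto

lemma prob_retained: "z \<in> int_box k \<Longrightarrow> prob (retained k z) = p ^ (k + 1)"
  using prob_survives[OF finite_path_index path_index_subset_perc_index]
  unfolding card_path_index .

lemma prob_retained_Int:
  assumes "x \<in> int_box k" "y \<in> int_box k"
  shows "prob (retained k x \<inter> retained k y) = p ^ (k + 1 + merge_level k x y)"
proof -
  have "prob (retained k x \<inter> retained k y) = prob (survives (path_index k x \<union> path_index k y))"
    unfolding survives_def by (auto intro: arg_cong[where f = prob])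
  also have "\<dots> = p ^ card (path_index k x \<union> path_index k y)"
    using assms path_index_subset_perc_index by (intro prob_survives) (auto simp: finite_path_index)
  finally show ?thesis unfolding card_path_index_Un .
qed

lemma mem_Pi_perc_Sk_iff:
  "\<omega> \<in> space M \<Longrightarrow> x \<in> Pi_perc U p \<omega> \<inter> Sk k \<longleftrightarrow>
    (\<exists>z. x \<in> dcube 0 z \<and> int_vec z \<in> Sk k \<and> \<omega> \<in> retained k z)"
proof safe
  fix z assume "\<omega> \<in> space M" "x \<in> dcube 0 z" "int_vec z \<in> Sk k" "\<omega> \<in> retained k z"
  then show "x \<in> Pi_perc U p \<omega>" "x \<in> Sk k"
    unfolding Pi_perc_eq mem_retained_iff dcube0_in_Sk_iff[OF \<open>x \<in> dcube 0 z\<close>] by auto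
next
  assume "\<omega> \<in> space M" "x \<in> Pi_perc U p \<omega>" "x \<in> Sk k"
  then obtain z k' where z: "x \<in> dcube 0 z" "int_vec z \<in> Sk k'" "\<forall>l\<le>k'. U (k', l, ancestor l z) \<omega> < p"
    unfolding Pi_perc_eq by blast
  have "int_vec z \<in> Sk k" using dcube0_in_Sk_iff[OF z(1)] \<open>x \<in> Sk k\<close> by simp
  then have "k' = k" using Sk_disjoint z(2) by metis
  then show "\<exists>z. x \<in> dcube 0 z \<and> int_vec z \<in> Sk k \<and> \<omega> \<in> retained k z"
    using z \<open>int_vec z \<in> Sk k\<close> \<open>\<omega> \<in> space M\<close> unfolding mem_retained_iff by blast
qed

subsection \<open>Upper bound: first moment\<close>

definition retained_count :: "nat \<Rightarrow> 'a \<Rightarrow> real" where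
  "retained_count k \<omega> = (\<Sum>z\<in>int_box k. indicator (retained k z) \<omega>)"

lemma retained_count_nonneg: "0 \<le> retained_count k \<omega>"
  unfolding retained_count_def by (simp add: sum_nonneg)

lemma retained_count_measurable[measurable]: "retained_count k \<in> borel_measurable M"
  unfolding retained_count_def using retained_in_events by measurable

lemma Nalpha_le_retained_count:
  assumes "\<omega> \<in> space M"
  shows "Nalpha \<alpha> (Pi_perc U p \<omega>) k \<le> 2 powr (- \<alpha> * (real k + 1)) * retained_count k \<omega>"
proof -
  define Z where "Z = {z \<in> int_box k. \<omega> \<in> retained k z}"
  have Z: "finite Z" unfolding Z_def by (rule finite_subset[OF _ finite_int_box]) auto
  have "Pi_perc U p \<omega> \<inter> Sk k \<subseteq> (\<Union>(l, j)\<in>(\<lambda>z. (0, z)) ` Z. dcube l j)"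
  proof
    fix x assume "x \<in> Pi_perc U p \<omega> \<inter> Sk k"
    then obtain z where z: "x \<in> dcube 0 z" "int_vec z \<in> Sk k" "\<omega> \<in> retained k z"
      using mem_Pi_perc_Sk_iff[OF assms] by blast
    then have "z \<in> Z"
      using Sk_subset_Vk unfolding Z_def int_vec_in_Vk_iff[symmetric] by blast
    then show "x \<in> (\<Union>(l, j)\<in>(\<lambda>z. (0, z)) ` Z. dcube l j)" using z(1) by blast
  qed
  then have "Nalpha \<alpha> (Pi_perc U p \<omega>) k \<le> (\<Sum>(l, j)\<in>(\<lambda>z. (0, z)) ` Z. 2 powr (\<alpha> * (real l - real k - 1)))"
    using Z by (intro Nalpha_le) auto
  also have "\<dots> = (\<Sum>z\<in>Z. 2 powr (\<alpha> * (real 0 - real k - 1)))"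
    by (subst sum.reindex) (auto simp: inj_on_def)
  also have "\<alpha> * (real 0 - real k - 1) = - \<alpha> * (real k + 1)"
    by (simp add: algebra_simps)
  also have "(\<Sum>z\<in>Z. 2 powr (- \<alpha> * (real k + 1))) = 2 powr (- \<alpha> * (real k + 1)) * real (card Z)"
    by simp
  also have "real (card Z) = retained_count k \<omega>"
    unfolding retained_count_def Z_def using finite_int_box[where 'i = 'n]
    by (simp add: sum.inter_filter indicator_def Int_def)
  finally show ?thesis .
qed

lemma expectation_retained_count:
  "integrable M (retained_count k)"
  "expectation (retained_count k) = (2 ^ (k + 1)) ^ CARD('n) * p ^ (k + 1)"
proof -
  note sum_indicator = integrable_sum_indicator expectation_sum_indicator
  note * = sum_indicator[of "int_box k" "retained k" "\<lambda>_. 1", OF finite_int_box retained_in_events]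
  show "integrable M (retained_count k)"
    using *(1) unfolding retained_count_def by simp
  have "expectation (retained_count k) = (\<Sum>z\<in>int_box k. prob (retained k z))"
    using *(2) unfolding retained_count_def by simp
  also have "\<dots> = (\<Sum>z\<in>(int_box k :: ('n \<Rightarrow> int) set). p ^ (k + 1))"
    by (simp add: prob_retained)
  finally show "expectation (retained_count k) = (2 ^ (k + 1)) ^ CARD('n) * p ^ (k + 1)"
    by (simp add: card_int_box)
qed

lemma nn_integral_scaled_retained_count:
  "(\<integral>\<^sup>+\<omega>. ennreal (2 powr (- \<alpha> * (real k + 1)) * retained_count k \<omega>) \<partial>M)
    = ennreal ((2 ^ CARD('n) * p / 2 powr \<alpha>) ^ (k + 1))"
proof -
  have "2 powr (- \<alpha> * (real k + 1)) = inverse (2 powr (\<alpha> * (real k + 1)))"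
    by (simp add: powr_minus[symmetric])
  also have "2 powr (\<alpha> * (real k + 1)) = (2 powr \<alpha>) powr real (k + 1)"
    by (simp add: powr_powr add.commute)
  also have "\<dots> = (2 powr \<alpha>) ^ (k + 1)"
    by (rule powr_realpow) simp
  finally have "2 powr (- \<alpha> * (real k + 1)) = inverse ((2 powr \<alpha>) ^ (k + 1))" .
  moreover have "((2::real) ^ (k + 1)) ^ CARD('n) = (2 ^ CARD('n)) ^ (k + 1)"
    by (simp add: power_mult[symmetric] mult.commute)
  ultimately have scale: "2 powr (- \<alpha> * (real k + 1)) * ((2 ^ (k + 1)) ^ CARD('n) * p ^ (k + 1))
      = (2 ^ CARD('n) * p / 2 powr \<alpha>) ^ (k + 1)"
    by (simp add: power_divide power_mult_distrib divide_inverse mult_ac power_inverse)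
  have "(\<integral>\<^sup>+\<omega>. ennreal (2 powr (- \<alpha> * (real k + 1)) * retained_count k \<omega>) \<partial>M)
      = ennreal (2 powr (- \<alpha> * (real k + 1))) * ennreal (expectation (retained_count k))"
    using retained_count_nonneg expectation_retained_count(1)
    by (simp add: ennreal_mult nn_integral_cmult nn_integral_eq_integral)
  also have "\<dots> = ennreal ((2 ^ CARD('n) * p / 2 powr \<alpha>) ^ (k + 1))"
    using scale p_pos by (simp add: expectation_retained_count(2) ennreal_mult[symmetric])
  finally show ?thesis .
qed

lemma summable_Nalpha_AE:
  assumes "0 < \<alpha>" "2 ^ CARD('n) * p < 2 powr \<alpha>"
  shows "AE \<omega> in M. summable (\<lambda>k. Nalpha \<alpha> (Pi_perc U p \<omega>) (Suc k))"
proof -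
  define r where "r = 2 ^ CARD('n) * p / 2 powr \<alpha>"
  define a where "a = (\<lambda>k \<omega>. 2 powr (- \<alpha> * (real k + 1)) * retained_count k \<omega>)"
  have r: "0 < r" "r < 1" unfolding r_def using assms p_pos by auto
  have a_nonneg: "0 \<le> a k \<omega>" for k \<omega>
    unfolding a_def using retained_count_nonneg by simp
  have a_measurable[measurable]: "a k \<in> borel_measurable M" for k
    unfolding a_def by measurable
  have "(\<integral>\<^sup>+\<omega>. ennreal (a k \<omega>) \<partial>M) = ennreal (r ^ (k + 1))" for k
    unfolding a_def r_def by (rule nn_integral_scaled_retained_count)
  then have "(\<integral>\<^sup>+\<omega>. (\<Sum>k. ennreal (a k \<omega>)) \<partial>M) = (\<Sum>k. ennreal (r ^ (k + 1)))"
    by (simp add: nn_integral_suminf)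
  also have "\<dots> < \<infinity>"
    using r summable_ignore_initial_segment[OF summable_geometric, of r 1]
    by (simp add: ennreal_suminf_neq_top less_top)
  finally have "AE \<omega> in M. (\<Sum>k. ennreal (a k \<omega>)) \<noteq> \<infinity>"
    by (intro nn_integral_PInf_AE) auto
  then show ?thesis
  proof (rule AE_mp, intro AE_I2 impI)
    fix \<omega> assume "\<omega> \<in> space M" "(\<Sum>k. ennreal (a k \<omega>)) \<noteq> \<infinity>"
    then have "summable (\<lambda>k. a k \<omega>)"
      using a_nonneg by (intro summable_suminf_not_top) auto
    then have "summable (\<lambda>k. a (Suc k) \<omega>)"
      by (subst summable_Suc_iff)
    moreover have "norm (Nalpha \<alpha> (Pi_perc U p \<omega>) (Suc k)) \<le> a (Suc k) \<omega>" for k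
      using Nalpha_le_retained_count[OF \<open>\<omega> \<in> space M\<close>, of \<alpha> "Suc k"]
        Nalpha_nonneg[of \<alpha> "Pi_perc U p \<omega>" "Suc k"]
      unfolding a_def by simp
    ultimately show "summable (\<lambda>k. Nalpha \<alpha> (Pi_perc U p \<omega>) (Suc k))"
      by (rule summable_comparison_test')
  qed
qed

subsection \<open>Lower bound: second moment\<close>

definition block_count :: "nat \<Rightarrow> 'a \<Rightarrow> real" where
  "block_count n \<omega> =
    (\<Sum>x\<in>corner_block n. indicator (retained (Suc n) x) \<omega>) / block_mean CARD('n) p n"

definition block_energy :: "real \<Rightarrow> nat \<Rightarrow> 'a \<Rightarrow> real" where
  "block_energy s n \<omega> = (\<Sum>(x, y)\<in>corner_block n \<times> corner_block n.
      indicator (retained (Suc n) x \<inter> retained (Suc n) y) \<omega> * s ^ (n + 2 - merge_level (Suc n) x y))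
    / (block_mean CARD('n) p n)\<^sup>2"

definition good_event :: "real \<Rightarrow> nat \<Rightarrow> 'a set" where
  "good_event q n = {\<omega> \<in> space M. 1 / 2 \<le> block_count n \<omega> \<and>
      block_energy (2 powr q) n \<omega> \<le> 8 * moment_bound CARD('n) p 1 * moment_bound CARD('n) p (2 powr q)}"

lemma block_count_mult_block_mean:
  "block_count n \<omega> * block_mean CARD('n) p n = real (card {x \<in> corner_block n. \<omega> \<in> retained (Suc n) x})"
  using block_mean_pos[OF p_pos, of "CARD('n)" n] finite_corner_block[where 'i = 'n]
  by (simp add: block_count_def sum.inter_filter indicator_def Int_def)

lemma block_energy_mult_block_mean:
  "block_energy s n \<omega> * (block_mean CARD('n) p n)\<^sup>2 = (\<Sum>x\<in>{x \<in> corner_block n. \<omega> \<in> retained (Suc n) x}.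
      \<Sum>y\<in>{x \<in> corner_block n. \<omega> \<in> retained (Suc n) x}. s ^ (n + 2 - merge_level (Suc n) x y))"
proof -
  define R where "R = {x \<in> corner_block n. \<omega> \<in> retained (Suc n) x}"
  have RR: "R \<times> R = {xy \<in> corner_block n \<times> corner_block n.
      \<omega> \<in> retained (Suc n) (fst xy) \<inter> retained (Suc n) (snd xy)}"
    unfolding R_def by auto
  have "(\<Sum>(x, y)\<in>R \<times> R. s ^ (n + 2 - merge_level (Suc n) x y))
      = (\<Sum>xy\<in>corner_block n \<times> corner_block n.
          if \<omega> \<in> retained (Suc n) (fst xy) \<inter> retained (Suc n) (snd xy)
          then s ^ (n + 2 - merge_level (Suc n) (fst xy) (snd xy)) else 0)"
    unfolding RR case_prod_beta by (rule sum.inter_filter) (simp add: finite_corner_block)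
  also have "\<dots> = block_energy s n \<omega> * (block_mean CARD('n) p n)\<^sup>2"
    unfolding block_energy_def using block_mean_pos[OF p_pos, of "CARD('n)" n]
    by (simp add: case_prod_beta) (intro sum.cong refl, simp add: indicator_def)
  finally show ?thesis unfolding R_def by (simp add: sum.cartesian_product)
qed

lemma block_count_sq: "(block_count n \<omega>)\<^sup>2 = block_energy 1 n \<omega>"
  unfolding block_count_def block_energy_def power_divide
  by (simp add: power2_eq_square sum_product sum.cartesian_product indicator_inter_arith)

lemma block_count_nonneg: "0 \<le> block_count n \<omega>"
  unfolding block_count_def using block_mean_pos[OF p_pos]
  by (intro divide_nonneg_pos sum_nonneg) auto

lemma block_energy_nonneg: "0 \<le> s \<Longrightarrow> 0 \<le> block_energy s n \<omega>"
  unfolding block_energy_def by (intro divide_nonneg_nonneg sum_nonneg) (auto simp: case_prod_beta)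

lemma block_measurable:
  assumes "space N = space M" "\<And>i. i \<in> perc_index \<Longrightarrow> fst i = Suc n \<Longrightarrow> U i \<in> borel_measurable N"
  shows "block_count n \<in> borel_measurable N" "block_energy s n \<in> borel_measurable N"
proof -
  have ret: "retained (Suc n) x \<in> sets N" if "x \<in> corner_block n" for x
    using assms corner_block_in_shell(1)[OF that] by (rule retained_measurable)
  show "block_count n \<in> borel_measurable N"
    unfolding block_count_def using ret
    by (intro borel_measurable_divide borel_measurable_const borel_measurable_sum
        borel_measurable_indicator) auto
  show "block_energy s n \<in> borel_measurable N"
    unfolding block_energy_def case_prod_beta using ret
    by (intro borel_measurable_divide borel_measurable_const borel_measurable_sum
        borel_measurable_times borel_measurable_indicator sets.Int) auto
qed

lemma block_moments:
  "integrable M (block_count n)" "integrable M (block_energy s n)"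
  "expectation (block_count n) = 1"
  "expectation (block_energy s n) = (\<Sum>(x, y)\<in>corner_block n \<times> (corner_block n :: ('n \<Rightarrow> int) set).
      p ^ (n + 2 + merge_level (Suc n) x y) * s ^ (n + 2 - merge_level (Suc n) x y))
    / (block_mean CARD('n) p n)\<^sup>2"
proof -
  let ?T = "corner_block n :: ('n \<Rightarrow> int) set"
  have ev: "retained (Suc n) x \<in> events" if "x \<in> ?T" for x
    using corner_block_in_shell(1)[OF that] by (rule retained_in_events)
  have pairs_ev: "(case xy of (x, y) \<Rightarrow> retained (Suc n) x \<inter> retained (Suc n) y) \<in> events"
    if "xy \<in> ?T \<times> ?T" for xy
    using that ev by auto
  note single = integrable_sum_indicator expectation_sum_indicator
  note single = single[of ?T "retained (Suc n)" "\<lambda>_. 1", OF finite_corner_block ev]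
  note pairs = integrable_sum_indicator expectation_sum_indicator
  note pairs = pairs[of "?T \<times> ?T" "\<lambda>(x, y). retained (Suc n) x \<inter> retained (Suc n) y"
      "\<lambda>(x, y). s ^ (n + 2 - merge_level (Suc n) x y)", OF finite_cartesian_product[OF
      finite_corner_block finite_corner_block] pairs_ev]
  show "integrable M (block_count n)"
    using single(1) unfolding block_count_def by simp
  show "integrable M (block_energy s n)"
    using pairs(1) unfolding block_energy_def by (simp add: case_prod_beta)
  have "(\<Sum>x\<in>?T. prob (retained (Suc n) x)) = (\<Sum>x\<in>?T. p ^ (n + 2))"
    by (simp add: prob_retained corner_block_in_shell)
  then show "expectation (block_count n) = 1"
    using single(2) p_pos
    by (simp add: block_count_def[abs_def] block_mean_def card_corner_block)
  show "expectation (block_energy s n) = (\<Sum>(x, y)\<in>?T \<times> ?T.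
      p ^ (n + 2 + merge_level (Suc n) x y) * s ^ (n + 2 - merge_level (Suc n) x y))
    / (block_mean CARD('n) p n)\<^sup>2"
    using pairs(2)
    by (simp add: block_energy_def[abs_def] case_prod_beta prob_retained_Int corner_block_in_shell
        mem_Times_iff)
qed

lemma expectation_block_energy_le:
  assumes "1 \<le> s" "s < 2 ^ CARD('n) * p"
  shows "expectation (block_energy s n) \<le> moment_bound CARD('n) p s"
proof -
  have "(\<Sum>x\<in>(corner_block n :: ('n \<Rightarrow> int) set). \<Sum>y\<in>corner_block n.
      p ^ (n + 2 + merge_level (Suc n) x y) * s ^ (n + 2 - merge_level (Suc n) x y))
      \<le> moment_bound CARD('n) p s * (real (card (corner_block n :: ('n \<Rightarrow> int) set)) * p ^ (n + 2))\<^sup>2"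
    unfolding corner_block_def moment_bound_def by (rule pair_sum_le[OF p_pos assms])
  then have "(\<Sum>(x, y)\<in>corner_block n \<times> (corner_block n :: ('n \<Rightarrow> int) set).
      p ^ (n + 2 + merge_level (Suc n) x y) * s ^ (n + 2 - merge_level (Suc n) x y))
      \<le> moment_bound CARD('n) p s * (block_mean CARD('n) p n)\<^sup>2"
    by (simp add: sum.cartesian_product card_corner_block block_mean_def)
  then show ?thesis
    unfolding block_moments(4) using block_mean_pos[OF p_pos, of "CARD('n)" n]
    by (simp add: pos_divide_le_eq)
qed

lemma prob_good_event:
  assumes "0 < q" "2 powr q < 2 ^ CARD('n) * p"
  shows "1 / (8 * moment_bound CARD('n) p 1) \<le> prob (good_event q n)"
proof -
  have "1 < 2 powr q" using assms(1) by simp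
  then have K: "1 \<le> moment_bound CARD('n) p 1" "1 \<le> moment_bound CARD('n) p (2 powr q)"
    using assms(2) p_pos p_le_1 by (auto intro: moment_bound_ge_1)
  show ?thesis
    unfolding good_event_def
  proof (rule prob_ge_of_second_moment)
    show "expectation (\<lambda>\<omega>. (block_count n \<omega>)\<^sup>2) \<le> moment_bound CARD('n) p 1"
      unfolding block_count_sq using \<open>1 < 2 powr q\<close> assms(2)
      by (intro expectation_block_energy_le) auto
    show "expectation (block_energy (2 powr q) n) \<le> moment_bound CARD('n) p (2 powr q)"
      using \<open>1 < 2 powr q\<close> assms(2) by (intro expectation_block_energy_le) auto
  qed (use K in \<open>auto simp: block_count_sq block_moments block_count_nonneg block_energy_nonneg\<close>)
qed

lemma Nalpha_ge_on_good_event: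
  assumes "0 < q" "2 powr q < 2 ^ CARD('n) * p" "\<omega> \<in> good_event q n"
  shows "1 / (32 * moment_bound CARD('n) p 1 * moment_bound CARD('n) p (2 powr q))
    \<le> Nalpha q (Pi_perc U p \<omega>) (Suc n)"
proof (rule Nalpha_ge)
  define T where "T = 8 * moment_bound CARD('n) p 1 * moment_bound CARD('n) p (2 powr q)"
  define m where "m = block_mean CARD('n) p n"
  define R where "R = {x \<in> corner_block n. \<omega> \<in> retained (Suc n) x}"
  have m: "0 < m" unfolding m_def using block_mean_pos[OF p_pos] .
  have "1 < 2 powr q" using assms(1) by simp
  then have "1 \<le> moment_bound CARD('n) p 1" "1 \<le> moment_bound CARD('n) p (2 powr q)"
    using assms(2) p_pos p_le_1 by (auto intro: moment_bound_ge_1)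
  then have "1 \<le> T" unfolding T_def by (smt (verit) mult_le_cancel_left1 mult_mono)
  have \<omega>: "\<omega> \<in> space M" "1 / 2 \<le> block_count n \<omega>" "block_energy (2 powr q) n \<omega> \<le> T"
    using assms(3) unfolding good_event_def T_def by auto
  have R: "finite R" unfolding R_def by (rule finite_subset[OF _ finite_corner_block]) auto
  have "m / 2 \<le> block_count n \<omega> * m"
    using mult_right_mono[OF \<omega>(2), of m] m by simp
  then have count: "m / 2 \<le> real (card R)"
    by (simp only: m_def R_def block_count_mult_block_mean)
  have "block_energy (2 powr q) n \<omega> * m\<^sup>2
      = (\<Sum>x\<in>R. \<Sum>y\<in>R. (2 powr q) ^ (n + 2 - merge_level (Suc n) x y))"
    unfolding m_def R_def by (rule block_energy_mult_block_mean)
  then have energy: "(\<Sum>x\<in>R. \<Sum>y\<in>R. (2 powr q) ^ (Suc n + 1 - merge_level (Suc n) x y)) \<le> T * m\<^sup>2"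
    using mult_right_mono[OF \<omega>(3), of "m\<^sup>2"] by simp
  fix C assume C: "finite C" "Pi_perc U p \<omega> \<inter> Sk (Suc n) \<subseteq> (\<Union>(l, j)\<in>C. dcube l j)"
  have "\<exists>l. (l, ancestor l x) \<in> C" if "x \<in> R" for x
  proof -
    have "int_vec x \<in> Pi_perc U p \<omega> \<inter> Sk (Suc n)"
      using that corner_block_in_shell(2) int_vec_in_dcube0 mem_Pi_perc_Sk_iff[OF \<omega>(1)]
      unfolding R_def by blast
    then obtain l j where "(l, j) \<in> C" "int_vec x \<in> dcube l j" using C(2) by blast
    then show ?thesis using int_vec_in_dcube_iff[of x l j] by auto
  qed
  from cover_cost_ge[OF R C(1) assms(1) \<open>1 \<le> T\<close> m count energy this]
  show "1 / (32 * moment_bound CARD('n) p 1 * moment_bound CARD('n) p (2 powr q))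
      \<le> (\<Sum>(l, j)\<in>C. 2 powr (q * (real l - real (Suc n) - 1)))"
    unfolding T_def by (simp add: mult.assoc)
qed

definition stage_events :: "nat \<Rightarrow> 'a set set" where
  "stage_events k = sigma_sets (space M)
    (\<Union>i\<in>{i \<in> perc_index. fst i = k}. {U i -` A \<inter> space M | A. A \<in> sets borel})"

lemma indep_stage_events: "indep_sets (\<lambda>n. stage_events (Suc n)) UNIV"
  unfolding stage_events_def
proof (rule indep_sets_collect_sigma)
  show "indep_sets (\<lambda>i. {U i -` A \<inter> space M | A. A \<in> sets borel})
      (\<Union>n. {i \<in> perc_index. fst i = Suc n})"
  proof (rule indep_sets_mono_index[rotated])
    show "indep_sets (\<lambda>i. {U i -` A \<inter> space M | A. A \<in> sets borel}) perc_index"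
      using U_indep by (simp add: indep_vars_def2)
  qed auto
  show "Int_stable {U i -` A \<inter> space M | A. A \<in> sets borel}" for i :: "nat \<times> nat \<times> ('n \<Rightarrow> int)"
    unfolding Int_stable_def
  proof safe
    fix A B :: "real set" assume "A \<in> sets borel" "B \<in> sets borel"
    then show "\<exists>C. (U i -` A \<inter> space M) \<inter> (U i -` B \<inter> space M) = U i -` C \<inter> space M \<and> C \<in> sets borel"
      by (intro exI[of _ "A \<inter> B"]) auto
  qed
  show "disjoint_family_on (\<lambda>n. {i \<in> perc_index. fst i = Suc n}) UNIV"
    unfolding disjoint_family_on_def by auto
qed

lemma in_stage_events:
  assumes "\<And>N. space N = space M \<Longrightarrow>
      (\<And>i. i \<in> perc_index \<Longrightarrow> fst i = k \<Longrightarrow> U i \<in> borel_measurable N) \<Longrightarrow> E \<in> sets N"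
  shows "E \<in> stage_events k"
proof -
  define G where "G = (\<Union>i\<in>{i \<in> (perc_index :: (nat \<times> nat \<times> ('n \<Rightarrow> int)) set). fst i = k}.
      {U i -` A \<inter> space M | A. A \<in> sets borel})"
  have G: "G \<subseteq> Pow (space M)" unfolding G_def by auto
  have "E \<in> sets (sigma (space M) G)"
  proof (rule assms)
    show "space (sigma (space M) G) = space M" using G by simp
    fix i :: "nat \<times> nat \<times> ('n \<Rightarrow> int)" assume "i \<in> perc_index" "fst i = k"
    then show "U i \<in> borel_measurable (sigma (space M) G)"
      using G by (intro measurableI) (auto simp: G_def)
  qed
  then show ?thesis using G unfolding stage_events_def G_def[symmetric] by simp
qed

lemma indep_good_events: "indep_events (good_event q) UNIV"
proof -
  have "good_event q n \<in> stage_events (Suc n)" for n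
  proof (rule in_stage_events)
    fix N assume N: "space N = space M"
      "\<And>i. i \<in> perc_index \<Longrightarrow> fst i = Suc n \<Longrightarrow> U i \<in> borel_measurable N"
    have "good_event q n = {\<omega> \<in> space N. 1 / 2 \<le> block_count n \<omega>} \<inter> {\<omega> \<in> space N.
        block_energy (2 powr q) n \<omega> \<le> 8 * moment_bound CARD('n) p 1 * moment_bound CARD('n) p (2 powr q)}"
      unfolding good_event_def N(1) by auto
    also have "\<dots> \<in> sets N"
      using block_measurable[OF N] by (intro sets.Int borel_measurable_le) auto
    finally show "good_event q n \<in> sets N" .
  qed
  then have "indep_sets (\<lambda>n. {good_event q n}) UNIV"
    by (intro indep_sets_mono_sets[OF indep_stage_events]) auto
  then show ?thesis unfolding indep_events_def_alt .
qed

lemma not_summable_Nalpha_AE: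
  assumes "0 < q" "2 powr q < 2 ^ CARD('n) * p"
  shows "AE \<omega> in M. \<not> summable (\<lambda>k. Nalpha q (Pi_perc U p \<omega>) (Suc k))"
proof -
  define c where "c = 1 / (32 * moment_bound CARD('n) p 1 * moment_bound CARD('n) p (2 powr q))"
  have "1 < 2 powr q" using assms(1) by simp
  then have K: "1 \<le> moment_bound CARD('n) p 1" "1 \<le> moment_bound CARD('n) p (2 powr q)"
    using assms(2) p_pos p_le_1 by (auto intro: moment_bound_ge_1)
  then have "0 < c" unfolding c_def by simp
  have "AE \<omega> in M. infinite {n. \<omega> \<in> good_event q n}"
    using K by (intro AE_infinite_of_indep_events[OF indep_good_events _ prob_good_event[OF assms]])
      simp
  then show ?thesis
  proof eventually_elim
    case (elim \<omega>)
    show ?case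
    proof
      assume "summable (\<lambda>k. Nalpha q (Pi_perc U p \<omega>) (Suc k))"
      then have "(\<lambda>k. Nalpha q (Pi_perc U p \<omega>) (Suc k)) \<longlonglongrightarrow> 0"
        by (rule summable_LIMSEQ_zero)
      then have "eventually (\<lambda>k. Nalpha q (Pi_perc U p \<omega>) (Suc k) < c) sequentially"
        using \<open>0 < c\<close> by (rule order_tendstoD)
      then obtain N where "\<And>k. N \<le> k \<Longrightarrow> Nalpha q (Pi_perc U p \<omega>) (Suc k) < c"
        unfolding eventually_sequentially by blast
      moreover obtain n where "N \<le> n" "\<omega> \<in> good_event q n"
        using elim unfolding infinite_nat_iff_unbounded_le by blast
      ultimately show False
        using Nalpha_ge_on_good_event[OF assms] unfolding c_def by (meson not_less)
    qed
  qed
qed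

theorem AE_DimH_Pi_perc: "AE \<omega> in M. DimH (Pi_perc U p \<omega>) = max 0 (real CARD('n) + log 2 p)"
proof -
  define \<beta> where "\<beta> = real CARD('n) + log 2 p"
  define S where "S = (\<lambda>\<omega> r. summable (\<lambda>k. Nalpha r (Pi_perc U p \<omega>) (Suc k)))"
  have "2 ^ CARD('n) * p = 2 powr \<beta>"
    unfolding \<beta>_def using p_pos by (simp add: powr_add powr_realpow)
  then have threshold: "2 ^ CARD('n) * p < 2 powr r \<longleftrightarrow> \<beta> < r" "2 powr r < 2 ^ CARD('n) * p \<longleftrightarrow> r < \<beta>"
    for r by simp_all
  have "AE \<omega> in M. max 0 \<beta> < real_of_rat r \<longrightarrow> S \<omega> (real_of_rat r)" for r
    using summable_Nalpha_AE[of "real_of_rat r"] threshold(1)[of "real_of_rat r"] unfolding S_def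
    by (cases "max 0 \<beta> < real_of_rat r") auto
  then have "AE \<omega> in M. \<forall>r. max 0 \<beta> < real_of_rat r \<longrightarrow> S \<omega> (real_of_rat r)"
    by (simp add: AE_all_countable)
  moreover have "AE \<omega> in M. 0 < real_of_rat r \<and> real_of_rat r < max 0 \<beta> \<longrightarrow> \<not> S \<omega> (real_of_rat r)"
    for r
    using not_summable_Nalpha_AE[of "real_of_rat r"] threshold(2)[of "real_of_rat r"] unfolding S_def
    by (cases "0 < real_of_rat r \<and> real_of_rat r < max 0 \<beta>") (auto simp: max_def split: if_splits)
  then have "AE \<omega> in M. \<forall>r. 0 < real_of_rat r \<and> real_of_rat r < max 0 \<beta> \<longrightarrow> \<not> S \<omega> (real_of_rat r)"
    by (simp add: AE_all_countable)
  ultimately show ?thesis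
  proof eventually_elim
    case (elim \<omega>)
    show ?case
      unfolding \<beta>_def[symmetric]
    proof (rule DimH_eqI)
      fix r :: real assume "r \<in> \<rat>"
      then obtain r' where "r = of_rat r'" by (auto elim: Rats_cases)
      then show "max 0 \<beta> < r \<Longrightarrow> summable (\<lambda>k. Nalpha r (Pi_perc U p \<omega>) (Suc k))"
        "0 < r \<Longrightarrow> r < max 0 \<beta> \<Longrightarrow> \<not> summable (\<lambda>k. Nalpha r (Pi_perc U p \<omega>) (Suc k))"
        using elim unfolding S_def by auto
    qed simp
  qed
qed

end

theorem corollary3p7:
  fixes M :: "'a measure"
    and U :: "nat \<times> nat \<times> ('n::finite \<Rightarrow> int) \<Rightarrow> 'a \<Rightarrow> real"
    and p :: real
  assumes "prob_space M"
    and "\<And>i. i \<in> perc_index \<Longrightarrow> U i \<in> borel_measurable M"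
    and "\<And>i. i \<in> perc_index \<Longrightarrow> distr M lborel (U i) = uniform_measure lborel {0<..<1}"
    and "prob_space.indep_vars M (\<lambda>_. borel) U perc_index"
    and "0 < p" and "p \<le> 1"
  shows "AE \<omega> in M. DimH (Pi_perc U p \<omega>) = max 0 (real CARD('n) + log 2 p)"
proof -
  interpret fractal_percolation M U p
    using assms by (intro fractal_percolation.intro fractal_percolation_axioms.intro) auto
  show ?thesis by (rule AE_DimH_Pi_perc)
qed

end
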